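(* Let $(R,\mathfrak m)$ be a noetherian local ring, $\nu$ a valuation centered on $R$, $\nu=\nu_1\circ\nu_2$ a decomposition with $\mathfrak p=\mathfrak C_{\nu_1}(R)$, and assume $I=\mathrm{Nil}(R)$ is the only associated prime ideal of $R$. Let $y_1,\ldots,y_r,y_{r+1},\ldots,y_{r+s}$ generate $\mathfrak p$ and let $b\in R\setminus\mathfrak p$. Let $\pi:R\to R^{(1)}$ be the local blowing up with respect to $\nu$ along $(b,y_1,\ldots,y_r)$, and set $y_i^{(1)}=\pi(y_i)/b$ for $1\le i\le r$ and $y^{(1)}_{r+k}=\pi(y_{r+k})$ for $1\le k\le s$. Then $\mathfrak p^{(1)}=\mathfrak C_{\nu_1}(R^{(1)})$ is generated by $y_1^{(1)},\ldots,y_{r+s}^{(1)}$.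
   Context: All rings are commutative noetherian with $1$; $\mathrm{Nil}(A)$ is the nilradical of $A$. A valuation on a ring $R$ is a map $\nu:R\to\Gamma\cup\{\infty\}$ ($\Gamma$ an ordered abelian group) with $\nu(ab)=\nu(a)+\nu(b)$, $\nu(a+b)\ge\min\{\nu(a),\nu(b)\}$, $\nu(1)=0$, $\nu(0)=\infty$, whose support $\mathrm{supp}(\nu)=\{a:\nu(a)=\infty\}$ is a minimal prime ideal; it extends to localizations at multiplicative sets disjoint from the support via $\nu(a/s)=\nu(a)-\nu(s)$ and restricts to subrings, implicitly. $\nu$ has a center on $R$ if $\nu\ge0$ on $R$; its center is $\mathfrak C_\nu(R)=\{a:\nu(a)>0\}$. $\nu$ is centered on $(R,\mathfrak m)$ if $\nu\ge0$ on $R$ and $\nu>0$ on $\mathfrak m$. $\nu R$ is the subgroup of $\Gamma$ generated by the finite values of $\nu$. Local blowing up: for $b\in R\setminus\mathrm{supp}(\nu)$ let $J(b)=\bigcup_{i\ge1}\mathrm{ann}_R(b^i)$, so $R/J(b)\subseteq R_b$. Given $a_1,\ldots,a_r\in R$ with $\nu(a_i)\ge\nu(b)$, let $R'=(R/J(b))[a_1/b,\ldots,a_r/b]\subseteq R_b$ and $R^{(1)}=R'_{\mathfrak C_\nu(R')}$; the canonical map $R\to R^{(1)}$ is the local blowing up of $R$ with respect to $\nu$ along $(b,a_1,\ldots,a_r)$. (Here $J(b)=0$ since $\mathrm{Nil}(R)$ is the only associated prime and $b\notin\mathrm{Nil}(R)$; also $\nu(y_i)>\nu(b)$ since $y_i\in\mathfrak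 p$, $b\notin\mathfrak p$.) Decomposition: let $\Delta$ be a convex subgroup of $\nu R$. Define $\nu_1(a)=\nu(a)+\Delta\in\nu R/\Delta$ (and $\infty$ if $\nu(a)=\infty$); $\nu_1$ is a valuation with a center on $R$, and $\mathfrak p=\mathfrak C_{\nu_1}(R)=\{a:\nu(a)>\delta\ \forall\delta\in\Delta\}$. Define $\nu_2$ on $R/\mathfrak p$ by $\nu_2(a+\mathfrak p)=\nu(a)$ for $a\notin\mathfrak p$, $\infty$ for $a\in\mathfrak p$. We write $\nu=\nu_1\circ\nu_2$. On a local blowing up of $R$ with respect to $\nu$, $\nu_1$ is defined by the same formula from the extension of $\nu$. *)

theory Defs
  imports "HOL-Algebra.Algebra"
begin

section \<open>Values: 'g option, with None playing the role of infinity\<close>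

definition vle :: "'g::linordered_ab_group_add option \<Rightarrow> 'g option \<Rightarrow> bool" where
  "vle x y = (case y of None \<Rightarrow> True | Some b \<Rightarrow> (case x of None \<Rightarrow> False | Some a \<Rightarrow> a \<le> b))"

definition vless :: "'g::linordered_ab_group_add option \<Rightarrow> 'g option \<Rightarrow> bool" where
  "vless x y = (vle x y \<and> x \<noteq> y)"

definition vadd :: "'g::linordered_ab_group_add option \<Rightarrow> 'g option \<Rightarrow> 'g option" where
  "vadd x y = (case (x, y) of (Some a, Some b) \<Rightarrow> Some (a + b) | _ \<Rightarrow> None)"

definition vsub :: "'g::linordered_ab_group_add option \<Rightarrow> 'g option \<Rightarrow> 'g option" where
  "vsub x y = (case (x, y) of (Some a, Some b) \<Rightarrow> Some (a - b) | _ \<Rightarrow> None)"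

definition nilradical :: "('a, 'b) ring_scheme \<Rightarrow> 'a set" where
  "nilradical R = {a \<in> carrier R. \<exists>n::nat. a [^]\<^bsub>R\<^esub> n = \<zero>\<^bsub>R\<^esub>}"

definition annihilator :: "('a, 'b) ring_scheme \<Rightarrow> 'a \<Rightarrow> 'a set" where
  "annihilator R x = {a \<in> carrier R. a \<otimes>\<^bsub>R\<^esub> x = \<zero>\<^bsub>R\<^esub>}"

definition associated_primes :: "('a, 'b) ring_scheme \<Rightarrow> 'a set set" where
  "associated_primes R = {P. primeideal P R \<and> (\<exists>x \<in> carrier R. P = annihilator R x)}"

definition minimal_prime :: "('a, 'b) ring_scheme \<Rightarrow> 'a set \<Rightarrow> bool" where
  "minimal_prime R P = (primeideal P R \<and> (\<forall>Q. primeideal Q R \<and> Q \<subseteq> P \<longrightarrow> Q = P))"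

definition local_ring :: "('a, 'b) ring_scheme \<Rightarrow> 'a set \<Rightarrow> bool" where
  "local_ring R m = (cring R \<and> maximalideal m R \<and> (\<forall>I. maximalideal I R \<longrightarrow> I = m))"

definition support :: "('a, 'b) ring_scheme \<Rightarrow> ('a \<Rightarrow> 'g::linordered_ab_group_add option) \<Rightarrow> 'a set" where
  "support R \<nu> = {a \<in> carrier R. \<nu> a = None}"

definition valuation :: "('a, 'b) ring_scheme \<Rightarrow> ('a \<Rightarrow> 'g::linordered_ab_group_add option) \<Rightarrow> bool" where
  "valuation R \<nu> =
    ((\<forall>a \<in> carrier R. \<forall>b \<in> carrier R. \<nu> (a \<otimes>\<^bsub>R\<^esub> b) = vadd (\<nu> a) (\<nu> b)) \<and>
     (\<forall>a \<in> carrier R. \<forall>b \<in> carrier R.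
        vle (\<nu> a) (\<nu> (a \<oplus>\<^bsub>R\<^esub> b)) \<or> vle (\<nu> b) (\<nu> (a \<oplus>\<^bsub>R\<^esub> b))) \<and>
     \<nu> \<one>\<^bsub>R\<^esub> = Some 0 \<and> \<nu> \<zero>\<^bsub>R\<^esub> = None \<and>
     minimal_prime R (support R \<nu>))"

definition has_center :: "('a, 'b) ring_scheme \<Rightarrow> ('a \<Rightarrow> 'g::linordered_ab_group_add option) \<Rightarrow> bool" where
  "has_center R \<nu> = (\<forall>a \<in> carrier R. vle (Some 0) (\<nu> a))"

definition centered_on :: "('a, 'b) ring_scheme \<Rightarrow> 'a set \<Rightarrow> ('a \<Rightarrow> 'g::linordered_ab_group_add option) \<Rightarrow> bool" where
  "centered_on R m \<nu> = (has_center R \<nu> \<and> (\<forall>a \<in> m. vless (Some 0) (\<nu> a)))"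

definition center :: "('a, 'b) ring_scheme \<Rightarrow> ('a \<Rightarrow> 'g::linordered_ab_group_add option) \<Rightarrow> 'a set" where
  "center R \<nu> = {a \<in> carrier R. vless (Some 0) (\<nu> a)}"

definition add_subgroup :: "'g::linordered_ab_group_add set \<Rightarrow> bool" where
  "add_subgroup H = (0 \<in> H \<and> (\<forall>x \<in> H. \<forall>y \<in> H. x - y \<in> H))"

definition value_group :: "('a, 'b) ring_scheme \<Rightarrow> ('a \<Rightarrow> 'g::linordered_ab_group_add option) \<Rightarrow> 'g set" where
  "value_group R \<nu> = \<Inter>{H. add_subgroup H \<and> {g. \<exists>a \<in> carrier R. \<nu> a = Some g} \<subseteq> H}"

definition convex_subgroup :: "'g::linordered_ab_group_add set \<Rightarrow> 'g set \<Rightarrow> bool" where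
  "convex_subgroup \<Delta> \<Gamma> = (add_subgroup \<Delta> \<and> \<Delta> \<subseteq> \<Gamma> \<and>
     (\<forall>\<delta> \<in> \<Delta>. \<forall>\<gamma> \<in> \<Gamma>. 0 \<le> \<gamma> \<and> \<gamma> \<le> \<delta> \<longrightarrow> \<gamma> \<in> \<Delta>))"

text \<open>Center of nu_1 (nu_1(a) = nu(a) + Delta) on a ring A:
  C_{nu_1}(A) = {a. nu(a) > delta for all delta in Delta}.\<close>
definition center1 :: "('a, 'b) ring_scheme \<Rightarrow> ('a \<Rightarrow> 'g::linordered_ab_group_add option) \<Rightarrow> 'g set \<Rightarrow> 'a set" where
  "center1 R \<nu> \<Delta> = {a \<in> carrier R. \<forall>\<delta> \<in> \<Delta>. vless (Some \<delta>) (\<nu> a)}"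

definition loc_rel :: "('a, 'b) ring_scheme \<Rightarrow> 'a set \<Rightarrow> (('a \<times> 'a) \<times> ('a \<times> 'a)) set" where
  "loc_rel A S = {((a, s), (a', s')). a \<in> carrier A \<and> s \<in> S \<and> a' \<in> carrier A \<and> s' \<in> S \<and>
      (\<exists>u \<in> S. u \<otimes>\<^bsub>A\<^esub> ((a \<otimes>\<^bsub>A\<^esub> s') \<oplus>\<^bsub>A\<^esub> (\<ominus>\<^bsub>A\<^esub> (a' \<otimes>\<^bsub>A\<^esub> s))) = \<zero>\<^bsub>A\<^esub>)}"

definition frac :: "('a, 'b) ring_scheme \<Rightarrow> 'a set \<Rightarrow> 'a \<Rightarrow> 'a \<Rightarrow> ('a \<times> 'a) set" where
  "frac A S a s = loc_rel A S `` {(a, s)}"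

definition loc_rep :: "('a \<times> 'a) set \<Rightarrow> 'a \<times> 'a" where
  "loc_rep U = (SOME p. p \<in> U)"

definition localization :: "('a, 'b) ring_scheme \<Rightarrow> 'a set \<Rightarrow> ('a \<times> 'a) set ring" where
  "localization A S =
    \<lparr>carrier = (carrier A \<times> S) // loc_rel A S,
     monoid.mult = (\<lambda>U V. frac A S (fst (loc_rep U) \<otimes>\<^bsub>A\<^esub> fst (loc_rep V))
                               (snd (loc_rep U) \<otimes>\<^bsub>A\<^esub> snd (loc_rep V))),
     monoid.one = frac A S \<one>\<^bsub>A\<^esub> \<one>\<^bsub>A\<^esub>,
     ring.zero = frac A S \<zero>\<^bsub>A\<^esub> \<one>\<^bsub>A\<^esub>,
     ring.add = (\<lambda>U V. frac A S ((fst (loc_rep U) \<otimes>\<^bsub>A\<^esub> snd (loc_rep V)) \<oplus>\<^bsub>A\<^esub>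
                                 (fst (loc_rep V) \<otimes>\<^bsub>A\<^esub> snd (loc_rep U)))
                               (snd (loc_rep U) \<otimes>\<^bsub>A\<^esub> snd (loc_rep V)))\<rparr>"

definition loc_val :: "('a \<Rightarrow> 'g::linordered_ab_group_add option) \<Rightarrow> ('a \<times> 'a) set \<Rightarrow> 'g option" where
  "loc_val \<nu> U = vsub (\<nu> (fst (loc_rep U))) (\<nu> (snd (loc_rep U)))"

definition powers :: "('a, 'b) ring_scheme \<Rightarrow> 'a \<Rightarrow> 'a set" where
  "powers A b = {b [^]\<^bsub>A\<^esub> (n::nat) | n. True}"

text \<open>R' = (R/J(b))[a_1/b, ..., a_r/b], realised as the subring of R_b generated by
  the image of R (which is R/J(b)) and the fractions a_i/b.\<close>
definition blowup_aff :: "('a, 'b) ring_scheme \<Rightarrow> 'a \<Rightarrow> 'a set \<Rightarrow> ('a \<times> 'a) set ring" where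
  "blowup_aff A b as =
    (localization A (powers A b))
      \<lparr>carrier := generate_ring (localization A (powers A b))
         ((\<lambda>a. frac A (powers A b) a \<one>\<^bsub>A\<^esub>) ` carrier A \<union> (\<lambda>a. frac A (powers A b) a b) ` as)\<rparr>"

definition blowup :: "('a, 'b) ring_scheme \<Rightarrow> ('a \<Rightarrow> 'g::linordered_ab_group_add option) \<Rightarrow> 'a \<Rightarrow> 'a set
    \<Rightarrow> (('a \<times> 'a) set \<times> ('a \<times> 'a) set) set ring" where
  "blowup A \<nu> b as = localization (blowup_aff A b as)
      (carrier (blowup_aff A b as) - center (blowup_aff A b as) (loc_val \<nu>))"

definition blowup_val :: "('a \<Rightarrow> 'g::linordered_ab_group_add option) \<Rightarrow> (('a \<times> 'a) set \<times> ('a \<times> 'a) set) set \<Rightarrow> 'g option" where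
  "blowup_val \<nu> = loc_val (loc_val \<nu>)"

definition blowup_incl :: "('a, 'b) ring_scheme \<Rightarrow> ('a \<Rightarrow> 'g::linordered_ab_group_add option) \<Rightarrow> 'a \<Rightarrow> 'a set
    \<Rightarrow> ('a \<times> 'a) set \<Rightarrow> (('a \<times> 'a) set \<times> ('a \<times> 'a) set) set" where
  "blowup_incl A \<nu> b as x = frac (blowup_aff A b as)
      (carrier (blowup_aff A b as) - center (blowup_aff A b as) (loc_val \<nu>)) x \<one>\<^bsub>blowup_aff A b as\<^esub>"

definition blowup_map :: "('a, 'b) ring_scheme \<Rightarrow> ('a \<Rightarrow> 'g::linordered_ab_group_add option) \<Rightarrow> 'a \<Rightarrow> 'a set
    \<Rightarrow> 'a \<Rightarrow> (('a \<times> 'a) set \<times> ('a \<times> 'a) set) set" where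
  "blowup_map A \<nu> b as a = blowup_incl A \<nu> b as (frac A (powers A b) a \<one>\<^bsub>A\<^esub>)"

end

theory Submission
  imports Defs
begin

text \<open>Write \<open>R'\<close> for \<open>R[y_1/b, ..., y_r/b] \<subseteq> R_b\<close>. Since \<open>\<nu>(b) \<in> \<Delta>\<close>, the fractions
  \<open>y_i/b\<close> and the elements \<open>y_(r+k)\<close> lie in the center of \<open>\<nu>\<^sub>1\<close> on \<open>R'\<close>. Modulo the ideal
  \<open>J\<close> they generate, every element of \<open>R'\<close> is congruent to the image of some \<open>a \<in> R\<close>; if
  the element is in the center of \<open>\<nu>\<^sub>1\<close>, so is \<open>a\<close>, hence \<open>a \<in> p \<subseteq> J\<close>. So \<open>J\<close> is the
  center of \<open>\<nu>\<^sub>1\<close> on \<open>R'\<close>. Finally, \<open>R^(1)\<close> localizes \<open>R'\<close> at elements of value \<open>0\<close>,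
  which does not change values, so the center on \<open>R^(1)\<close> is the extension of \<open>J\<close>.\<close>

lemma vle_Some [simp]:
  "vle (Some a) (Some b) \<longleftrightarrow> a \<le> b" "vle (Some a) y \<longleftrightarrow> (\<forall>c. y = Some c \<longrightarrow> a \<le> c)"
  by (auto simp: vle_def split: option.splits)

lemma vless_simps [simp]:
  "vless (Some a) (Some b) \<longleftrightarrow> a < b" "vless x None \<longleftrightarrow> x \<noteq> None" "\<not> vless None y"
  by (auto simp: vless_def vle_def split: option.splits)

lemma vadd_simps [simp]: "vadd None y = None" "vadd x None = None" "vadd (Some a) (Some b) = Some (a + b)"
  by (auto simp: vadd_def split: option.splits)

lemma vsub_simps [simp]: "vsub None y = None" "vsub x None = None" "vsub (Some a) (Some b) = Some (a - b)"
  by (auto simp: vsub_def split: option.splits)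

lemma vadd_zero_left [simp]: "vadd (Some 0) x = x"
  by (cases x) auto

lemma vsub_zero [simp]: "vsub x (Some 0) = x"
  by (cases x) auto

lemma vle_trans: "vle x y \<Longrightarrow> vle y z \<Longrightarrow> vle x z"
  by (auto simp: vle_def split: option.splits)

lemma vle_total: "vle x y \<or> vle y x"
  by (auto simp: vle_def split: option.splits)

lemma vless_imp_vle: "vless x y \<Longrightarrow> vle x y"
  by (simp add: vless_def)

lemma vless_vle_trans: "vless x y \<Longrightarrow> vle y z \<Longrightarrow> vless x z"
  by (auto simp: vless_def vle_def split: option.splits)

lemma vle_vsub_iff: "vle c (vsub x (Some s)) \<longleftrightarrow> vle (vadd c (Some s)) x"
  by (auto simp: vle_def vadd_def vsub_def le_diff_eq split: option.splits)

lemma vless_vsub_iff: "vless c (vsub x (Some s)) \<longleftrightarrow> vless (vadd c (Some s)) x"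
  by (auto simp: vless_def vle_def vadd_def vsub_def le_diff_eq split: option.splits)

lemma vadd_left_mono: "vle x y \<Longrightarrow> vle (vadd x z) (vadd y z)"
  by (auto simp: vle_def vadd_def split: option.splits)

lemma vadd_left_cancel: "vadd (Some k) x = vadd (Some k) y \<Longrightarrow> x = y"
  by (cases x; cases y) auto

lemma vsub_eq_vsub: "vadd x (Some t) = vadd y (Some s) \<Longrightarrow> vsub x (Some s) = vsub y (Some t)"
  by (cases x; cases y) (auto simp: algebra_simps)

lemma vsub_vadd_distrib: "vsub (vadd x y) (Some (p + q)) = vadd (vsub x (Some p)) (vsub y (Some q))"
  by (cases x; cases y) (auto simp: algebra_simps)

lemma vadd_nonneg_vless: "vle (Some 0) x \<Longrightarrow> vless c y \<Longrightarrow> vless c (vadd x y)"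
  by (cases x; cases y; cases c) (auto, metis add_0 add_le_less_mono)

lemma vadd_nonneg_nonneg: "vle (Some 0) x \<Longrightarrow> vle (Some 0) y \<Longrightarrow> vle (Some 0) (vadd x y)"
  by (cases x; cases y) auto

text \<open>A valuation without the condition that its support be a minimal prime; this is the
  notion that passes to subrings and localizations.\<close>
definition pre_valuation :: "('a, 'b) ring_scheme \<Rightarrow> ('a \<Rightarrow> 'g::linordered_ab_group_add option) \<Rightarrow> bool" where
  "pre_valuation A \<nu> \<longleftrightarrow>
     (\<forall>a\<in>carrier A. \<forall>b\<in>carrier A. \<nu> (a \<otimes>\<^bsub>A\<^esub> b) = vadd (\<nu> a) (\<nu> b)) \<and>
     (\<forall>c. \<forall>a\<in>carrier A. \<forall>b\<in>carrier A. vle c (\<nu> a) \<and> vle c (\<nu> b) \<longrightarrow> vle c (\<nu> (a \<oplus>\<^bsub>A\<^esub> b))) \<and>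
     \<nu> \<one>\<^bsub>A\<^esub> = Some 0 \<and> \<nu> \<zero>\<^bsub>A\<^esub> = None"

lemma valuation_imp_pre_valuation: "valuation R \<nu> \<Longrightarrow> pre_valuation R \<nu>"
  unfolding valuation_def pre_valuation_def by (meson vle_trans)

lemma pre_valuation_subring: "pre_valuation A \<nu> \<Longrightarrow> H \<subseteq> carrier A \<Longrightarrow> pre_valuation (A\<lparr>carrier := H\<rparr>) \<nu>"
  unfolding pre_valuation_def by (simp; blast)

context
  fixes A (structure) and \<nu> :: "'a \<Rightarrow> 'g::linordered_ab_group_add option"
  assumes pv: "pre_valuation A \<nu>"
begin

lemma pre_valuation_mult: "a \<in> carrier A \<Longrightarrow> b \<in> carrier A \<Longrightarrow> \<nu> (a \<otimes>\<^bsub>A\<^esub> b) = vadd (\<nu> a) (\<nu> b)"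
  using pv by (simp add: pre_valuation_def)

lemma pre_valuation_add:
  "a \<in> carrier A \<Longrightarrow> b \<in> carrier A \<Longrightarrow> vle c (\<nu> a) \<Longrightarrow> vle c (\<nu> b) \<Longrightarrow> vle c (\<nu> (a \<oplus>\<^bsub>A\<^esub> b))"
  using pv by (simp add: pre_valuation_def)

lemma pre_valuation_one: "\<nu> \<one>\<^bsub>A\<^esub> = Some 0"
  using pv by (simp add: pre_valuation_def)

lemma pre_valuation_zero: "\<nu> \<zero>\<^bsub>A\<^esub> = None"
  using pv by (simp add: pre_valuation_def)

lemma pre_valuation_add_vless:
  assumes "a \<in> carrier A" "b \<in> carrier A" "vless c (\<nu> a)" "vless c (\<nu> b)"
  shows "vless c (\<nu> (a \<oplus>\<^bsub>A\<^esub> b))"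
proof -
  define m where "m = (if vle (\<nu> a) (\<nu> b) then \<nu> a else \<nu> b)"
  have "vle m (\<nu> a)" "vle m (\<nu> b)" "vless c m"
    using assms(3,4) vle_total unfolding m_def by auto
  then show ?thesis
    using pre_valuation_add[OF assms(1,2)] vless_vle_trans by blast
qed

lemma pre_valuation_neg:
  assumes "ring A" "a \<in> carrier A"
  shows "\<nu> (\<ominus>\<^bsub>A\<^esub> a) = \<nu> a"
proof -
  interpret ring A by fact
  have "(\<ominus> \<one>) \<otimes> (\<ominus> \<one>) = \<one>" by algebra
  then have "vadd (\<nu> (\<ominus> \<one>)) (\<nu> (\<ominus> \<one>)) = Some 0"
    using pre_valuation_one pre_valuation_mult[of "\<ominus> \<one>" "\<ominus> \<one>"] by simp
  then have "\<nu> (\<ominus> \<one>) = Some 0"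
    by (cases "\<nu> (\<ominus> \<one>)") (simp_all add: double_zero)
  moreover have "\<ominus> a = (\<ominus> \<one>) \<otimes> a" using assms(2) by algebra
  ultimately show ?thesis using pre_valuation_mult assms(2) by simp
qed

end

lemma cring_idealI:
  fixes A (structure)
  assumes "cring A" "I \<subseteq> carrier A" "\<zero> \<in> I" "\<And>a b. a \<in> I \<Longrightarrow> b \<in> I \<Longrightarrow> a \<oplus> b \<in> I"
    "\<And>a. a \<in> I \<Longrightarrow> \<ominus> a \<in> I" "\<And>a x. a \<in> I \<Longrightarrow> x \<in> carrier A \<Longrightarrow> x \<otimes> a \<in> I"
  shows "ideal I A"
proof -
  interpret cring A by fact
  show ?thesis
  proof (rule idealI)
    show "subgroup I (add_monoid A)"
      by (rule group.subgroupI[OF a_group]) (use assms(2-5) in \<open>auto simp: a_inv_def[symmetric]\<close>)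
    show "\<And>a x. a \<in> I \<Longrightarrow> x \<in> carrier A \<Longrightarrow> a \<otimes> x \<in> I"
      using assms(2,6) m_comm by (metis subsetD)
  qed (use assms(6) ring_axioms in auto)
qed

lemma center1_ideal:
  assumes "cring A" "pre_valuation A \<nu>" "\<forall>a\<in>carrier A. vle (Some 0) (\<nu> a)"
  shows "ideal (center1 A \<nu> \<Delta>) A"
proof (rule cring_idealI[OF assms(1)])
  interpret cring A by fact
  show "center1 A \<nu> \<Delta> \<subseteq> carrier A" "\<zero>\<^bsub>A\<^esub> \<in> center1 A \<nu> \<Delta>"
    using pre_valuation_zero[OF assms(2)] by (auto simp: center1_def)
  show "a \<oplus>\<^bsub>A\<^esub> b \<in> center1 A \<nu> \<Delta>" if "a \<in> center1 A \<nu> \<Delta>" "b \<in> center1 A \<nu> \<Delta>" for a b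
    using that pre_valuation_add_vless[OF assms(2)] by (auto simp: center1_def)
  show "\<ominus>\<^bsub>A\<^esub> a \<in> center1 A \<nu> \<Delta>" if "a \<in> center1 A \<nu> \<Delta>" for a
    using that pre_valuation_neg[OF assms(2) ring_axioms] by (auto simp: center1_def)
  show "x \<otimes>\<^bsub>A\<^esub> a \<in> center1 A \<nu> \<Delta>" if "a \<in> center1 A \<nu> \<Delta>" "x \<in> carrier A" for a x
    using that pre_valuation_mult[OF assms(2)] assms(3)
    by (auto simp: center1_def intro: vadd_nonneg_vless)
qed

lemma pre_valuation_nonneg_generate_ring:
  assumes "ring A" "pre_valuation A \<nu>" "H \<subseteq> carrier A" "\<forall>h\<in>H. vle (Some 0) (\<nu> h)"
    and "u \<in> generate_ring A H"
  shows "vle (Some 0) (\<nu> u)"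
  using assms(5)
proof (induction u rule: generate_ring.induct)
  interpret ring A by fact
  case one
  then show ?case using pre_valuation_one[OF assms(2)] by simp
next
  case (incl h)
  then show ?case using assms(4) by blast
next
  case (a_inv h)
  then show ?case
    using pre_valuation_neg[OF assms(2,1)] ring.generate_ring_in_carrier[OF assms(1,3)] by auto
next
  case (eng_add h1 h2)
  then show ?case
    using pre_valuation_add[OF assms(2)] ring.generate_ring_in_carrier[OF assms(1,3)] by blast
next
  case (eng_mult h1 h2)
  then have "\<nu> (h1 \<otimes>\<^bsub>A\<^esub> h2) = vadd (\<nu> h1) (\<nu> h2)"
    using pre_valuation_mult[OF assms(2)] ring.generate_ring_in_carrier[OF assms(1,3)] by blast
  with eng_mult.IH show ?case by (metis vadd_nonneg_nonneg)
qed

section \<open>Localization at a multiplicative subset\<close>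

locale multiplicative_subset = cring A for A (structure) +
  fixes S
  assumes subset_carrier: "S \<subseteq> carrier A"
    and one_mem: "\<one> \<in> S"
    and mult_mem: "s \<in> S \<Longrightarrow> t \<in> S \<Longrightarrow> s \<otimes> t \<in> S"
begin

abbreviation L where "L \<equiv> localization A S"

lemma mem_carrier: "s \<in> S \<Longrightarrow> s \<in> carrier A"
  using subset_carrier by auto

lemmas mem_simps = mult_mem mem_carrier one_mem

lemma loc_rel_iff:
  "((a, s), (a', s')) \<in> loc_rel A S \<longleftrightarrow> a \<in> carrier A \<and> s \<in> S \<and> a' \<in> carrier A \<and> s' \<in> S \<and>
     (\<exists>u\<in>S. u \<otimes> (a \<otimes> s') = u \<otimes> (a' \<otimes> s))"
proof -
  have "u \<otimes> (a \<otimes> s' \<oplus> \<ominus> (a' \<otimes> s)) = \<zero> \<longleftrightarrow> u \<otimes> (a \<otimes> s') = u \<otimes> (a' \<otimes> s)"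
    if "a \<in> carrier A" "s \<in> S" "a' \<in> carrier A" "s' \<in> S" "u \<in> S" for u
  proof -
    have c: "s \<in> carrier A" "s' \<in> carrier A" "u \<in> carrier A" using that mem_carrier by auto
    have "u \<otimes> (a \<otimes> s' \<oplus> \<ominus> (a' \<otimes> s)) = u \<otimes> (a \<otimes> s') \<ominus> u \<otimes> (a' \<otimes> s)"
      using c that by algebra
    then show ?thesis using c that r_right_minus_eq by simp
  qed
  then show ?thesis unfolding loc_rel_def by auto
qed

lemma loc_rel_equiv: "equiv (carrier A \<times> S) (loc_rel A S)"
proof (rule equivI)
  show "loc_rel A S \<subseteq> (carrier A \<times> S) \<times> (carrier A \<times> S)" by (auto simp: loc_rel_def)
  show "refl_on (carrier A \<times> S) (loc_rel A S)"
    by (rule refl_onI) (use one_mem in \<open>auto simp: loc_rel_iff\<close>)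
  show "sym (loc_rel A S)"
    by (rule symI) (clarsimp simp: loc_rel_iff, metis)
  show "trans (loc_rel A S)"
  proof (rule transI)
    fix x y z assume "(x, y) \<in> loc_rel A S" "(y, z) \<in> loc_rel A S"
    then obtain a s a' s' a'' s'' u v where xyz: "x = (a, s)" "y = (a', s')" "z = (a'', s'')"
      and c: "a \<in> carrier A" "s \<in> S" "a' \<in> carrier A" "s' \<in> S" "a'' \<in> carrier A" "s'' \<in> S" "u \<in> S" "v \<in> S"
      and eq1: "u \<otimes> (a \<otimes> s') = u \<otimes> (a' \<otimes> s)"
      and eq2: "v \<otimes> (a' \<otimes> s'') = v \<otimes> (a'' \<otimes> s')"
      by (cases x, cases y, cases z) (auto simp: loc_rel_iff)
    have c': "u \<in> carrier A" "v \<in> carrier A" "s \<in> carrier A" "s' \<in> carrier A" "s'' \<in> carrier A"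
      using c mem_carrier by auto
    have "(u \<otimes> v \<otimes> s') \<otimes> (a \<otimes> s'') = (v \<otimes> s'') \<otimes> (u \<otimes> (a \<otimes> s'))"
      using c c' by (simp add: m_ac)
    also have "\<dots> = (u \<otimes> s) \<otimes> (v \<otimes> (a' \<otimes> s''))"
      unfolding eq1 using c c' by (simp add: m_ac)
    also have "\<dots> = (u \<otimes> v \<otimes> s') \<otimes> (a'' \<otimes> s)"
      unfolding eq2 using c c' by (simp add: m_ac)
    finally show "(x, z) \<in> loc_rel A S"
      unfolding xyz loc_rel_iff using c mult_mem by blast
  qed
qed

lemma frac_eq_iff:
  "a \<in> carrier A \<Longrightarrow> s \<in> S \<Longrightarrow> a' \<in> carrier A \<Longrightarrow> s' \<in> S \<Longrightarrow>
   frac A S a s = frac A S a' s' \<longleftrightarrow> ((a, s), (a', s')) \<in> loc_rel A S"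
  unfolding frac_def by (rule eq_equiv_class_iff[OF loc_rel_equiv]) auto

lemma frac_eqI:
  "a \<in> carrier A \<Longrightarrow> s \<in> S \<Longrightarrow> a' \<in> carrier A \<Longrightarrow> s' \<in> S \<Longrightarrow>
   a \<otimes> s' = a' \<otimes> s \<Longrightarrow> frac A S a s = frac A S a' s'"
  by (subst frac_eq_iff) (use mem_carrier one_mem in \<open>auto simp: loc_rel_iff\<close>)

lemma frac_closed: "a \<in> carrier A \<Longrightarrow> s \<in> S \<Longrightarrow> frac A S a s \<in> carrier L"
  unfolding localization_def frac_def by (auto intro: quotientI)

lemma carrier_localizationE:
  assumes "x \<in> carrier L"
  obtains a s where "a \<in> carrier A" "s \<in> S" "x = frac A S a s"
  using assms unfolding localization_def frac_def by (auto elim!: quotientE)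

lemma loc_rep_frac:
  assumes "a \<in> carrier A" "s \<in> S"
  shows "fst (loc_rep (frac A S a s)) \<in> carrier A" "snd (loc_rep (frac A S a s)) \<in> S"
    "((a, s), (fst (loc_rep (frac A S a s)), snd (loc_rep (frac A S a s)))) \<in> loc_rel A S"
proof -
  have "(a, s) \<in> frac A S a s"
    using assms one_mem by (auto simp: frac_def loc_rel_iff)
  then have "loc_rep (frac A S a s) \<in> frac A S a s"
    unfolding loc_rep_def by (rule someI)
  then have "((a, s), loc_rep (frac A S a s)) \<in> loc_rel A S"
    by (simp add: frac_def)
  then show "fst (loc_rep (frac A S a s)) \<in> carrier A" "snd (loc_rep (frac A S a s)) \<in> S"
    "((a, s), (fst (loc_rep (frac A S a s)), snd (loc_rep (frac A S a s)))) \<in> loc_rel A S"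
    by (cases "loc_rep (frac A S a s)"; simp add: loc_rel_iff)+
qed

text \<open>The operations of \<open>localization\<close> are defined through arbitrary representatives;
  the next two lemmas make them well defined.\<close>
lemma loc_rel_mult:
  assumes "((a, s), (a1, s1)) \<in> loc_rel A S" "((c, t), (c1, t1)) \<in> loc_rel A S"
  shows "((a \<otimes> c, s \<otimes> t), (a1 \<otimes> c1, s1 \<otimes> t1)) \<in> loc_rel A S"
proof -
  obtain u v where c: "a \<in> carrier A" "s \<in> S" "a1 \<in> carrier A" "s1 \<in> S"
      "c \<in> carrier A" "t \<in> S" "c1 \<in> carrier A" "t1 \<in> S" "u \<in> S" "v \<in> S"
    and eq1: "u \<otimes> (a \<otimes> s1) = u \<otimes> (a1 \<otimes> s)" and eq2: "v \<otimes> (c \<otimes> t1) = v \<otimes> (c1 \<otimes> t)"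
    using assms by (auto simp: loc_rel_iff)
  have c': "u \<in> carrier A" "v \<in> carrier A" "s \<in> carrier A" "s1 \<in> carrier A" "t \<in> carrier A" "t1 \<in> carrier A"
    using c mem_carrier by auto
  have "(u \<otimes> v) \<otimes> ((a \<otimes> c) \<otimes> (s1 \<otimes> t1)) = (u \<otimes> (a \<otimes> s1)) \<otimes> (v \<otimes> (c \<otimes> t1))"
    using c c' by (simp add: m_ac)
  also have "\<dots> = (u \<otimes> v) \<otimes> ((a1 \<otimes> c1) \<otimes> (s \<otimes> t))"
    unfolding eq1 eq2 using c c' by (simp add: m_ac)
  finally show ?thesis
    unfolding loc_rel_iff using c c' mult_mem by blast
qed

lemma loc_rel_add:
  assumes "((a, s), (a1, s1)) \<in> loc_rel A S" "((c, t), (c1, t1)) \<in> loc_rel A S"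
  shows "((a \<otimes> t \<oplus> c \<otimes> s, s \<otimes> t), (a1 \<otimes> t1 \<oplus> c1 \<otimes> s1, s1 \<otimes> t1)) \<in> loc_rel A S"
proof -
  obtain u v where c: "a \<in> carrier A" "s \<in> S" "a1 \<in> carrier A" "s1 \<in> S"
      "c \<in> carrier A" "t \<in> S" "c1 \<in> carrier A" "t1 \<in> S" "u \<in> S" "v \<in> S"
    and eq1: "u \<otimes> (a \<otimes> s1) = u \<otimes> (a1 \<otimes> s)" and eq2: "v \<otimes> (c \<otimes> t1) = v \<otimes> (c1 \<otimes> t)"
    using assms by (auto simp: loc_rel_iff)
  have c': "u \<in> carrier A" "v \<in> carrier A" "s \<in> carrier A" "s1 \<in> carrier A" "t \<in> carrier A" "t1 \<in> carrier A"
    using c mem_carrier by auto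
  have "(u \<otimes> v) \<otimes> ((a \<otimes> t \<oplus> c \<otimes> s) \<otimes> (s1 \<otimes> t1)) =
      (v \<otimes> t \<otimes> t1) \<otimes> (u \<otimes> (a \<otimes> s1)) \<oplus> (u \<otimes> s \<otimes> s1) \<otimes> (v \<otimes> (c \<otimes> t1))"
    using c c' by (simp add: m_ac l_distr r_distr)
  also have "\<dots> = (u \<otimes> v) \<otimes> ((a1 \<otimes> t1 \<oplus> c1 \<otimes> s1) \<otimes> (s \<otimes> t))"
    unfolding eq1 eq2 using c c' by (simp add: m_ac l_distr r_distr a_comm)
  finally show ?thesis
    unfolding loc_rel_iff using c c' mult_mem by blast
qed

lemma mult_frac:
  "a \<in> carrier A \<Longrightarrow> s \<in> S \<Longrightarrow> c \<in> carrier A \<Longrightarrow> t \<in> S \<Longrightarrow>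
   frac A S a s \<otimes>\<^bsub>L\<^esub> frac A S c t = frac A S (a \<otimes> c) (s \<otimes> t)"
  unfolding localization_def
  by (simp, rule sym, subst frac_eq_iff)
    (use loc_rep_frac[of a s] loc_rep_frac[of c t] mult_mem in \<open>auto intro: loc_rel_mult\<close>)

lemma add_frac:
  "a \<in> carrier A \<Longrightarrow> s \<in> S \<Longrightarrow> c \<in> carrier A \<Longrightarrow> t \<in> S \<Longrightarrow>
   frac A S a s \<oplus>\<^bsub>L\<^esub> frac A S c t = frac A S (a \<otimes> t \<oplus> c \<otimes> s) (s \<otimes> t)"
  unfolding localization_def
  by (simp, rule sym, subst frac_eq_iff)
    (use loc_rep_frac[of a s] loc_rep_frac[of c t] mult_mem mem_carrier in \<open>auto intro: loc_rel_add\<close>)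

lemma one_localization: "\<one>\<^bsub>L\<^esub> = frac A S \<one> \<one>"
  by (simp add: localization_def)

lemma zero_localization: "\<zero>\<^bsub>L\<^esub> = frac A S \<zero> \<one>"
  by (simp add: localization_def)

lemma cring_localization: "cring L"
proof (rule cringI)
  show "abelian_group L"
  proof (rule abelian_groupI)
    fix x y z assume "x \<in> carrier L" "y \<in> carrier L" "z \<in> carrier L"
    then show "x \<oplus>\<^bsub>L\<^esub> y \<oplus>\<^bsub>L\<^esub> z = x \<oplus>\<^bsub>L\<^esub> (y \<oplus>\<^bsub>L\<^esub> z)"
      by (elim carrier_localizationE) (simp add: add_frac mem_simps,
          rule frac_eqI, simp_all add: mem_simps m_ac a_ac l_distr r_distr)
  next
    fix x y assume "x \<in> carrier L" "y \<in> carrier L"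
    then show "x \<oplus>\<^bsub>L\<^esub> y \<in> carrier L"
      by (elim carrier_localizationE) (simp add: add_frac frac_closed mem_simps)
    from \<open>x \<in> carrier L\<close> \<open>y \<in> carrier L\<close> show "x \<oplus>\<^bsub>L\<^esub> y = y \<oplus>\<^bsub>L\<^esub> x"
      by (elim carrier_localizationE) (simp add: add_frac mem_simps,
          rule frac_eqI, simp_all add: mem_simps m_ac a_ac)
  next
    fix x assume x: "x \<in> carrier L"
    then show "\<zero>\<^bsub>L\<^esub> \<oplus>\<^bsub>L\<^esub> x = x"
      by (elim carrier_localizationE) (simp add: zero_localization add_frac mem_simps)
    from x obtain a s where as: "a \<in> carrier A" "s \<in> S" "x = frac A S a s"
      by (rule carrier_localizationE)
    have "frac A S (\<ominus> a) s \<oplus>\<^bsub>L\<^esub> x = frac A S (\<ominus> a \<otimes> s \<oplus> a \<otimes> s) (s \<otimes> s)"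
      using as by (simp add: add_frac mem_simps)
    also have "\<dots> = \<zero>\<^bsub>L\<^esub>"
      unfolding zero_localization using as by (intro frac_eqI) (simp_all add: mem_simps l_minus l_neg)
    finally show "\<exists>y\<in>carrier L. y \<oplus>\<^bsub>L\<^esub> x = \<zero>\<^bsub>L\<^esub>"
      using as frac_closed by blast
  qed (simp add: zero_localization frac_closed mem_simps)
next
  show "comm_monoid L"
  proof (rule comm_monoidI)
    fix x y z assume "x \<in> carrier L" "y \<in> carrier L" "z \<in> carrier L"
    then show "x \<otimes>\<^bsub>L\<^esub> y \<otimes>\<^bsub>L\<^esub> z = x \<otimes>\<^bsub>L\<^esub> (y \<otimes>\<^bsub>L\<^esub> z)"
      by (elim carrier_localizationE) (simp add: mult_frac mem_simps m_assoc)
  next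
    fix x y assume "x \<in> carrier L" "y \<in> carrier L"
    then show "x \<otimes>\<^bsub>L\<^esub> y \<in> carrier L"
      by (elim carrier_localizationE) (simp add: mult_frac frac_closed mem_simps)
    from \<open>x \<in> carrier L\<close> \<open>y \<in> carrier L\<close> show "x \<otimes>\<^bsub>L\<^esub> y = y \<otimes>\<^bsub>L\<^esub> x"
      by (elim carrier_localizationE) (simp add: mult_frac mem_simps m_comm)
  next
    fix x assume "x \<in> carrier L"
    then show "\<one>\<^bsub>L\<^esub> \<otimes>\<^bsub>L\<^esub> x = x"
      by (elim carrier_localizationE) (simp add: one_localization mult_frac mem_simps)
  qed (simp add: one_localization frac_closed mem_simps)
next
  fix x y z assume "x \<in> carrier L" "y \<in> carrier L" "z \<in> carrier L"
  then show "(x \<oplus>\<^bsub>L\<^esub> y) \<otimes>\<^bsub>L\<^esub> z = x \<otimes>\<^bsub>L\<^esub> z \<oplus>\<^bsub>L\<^esub> y \<otimes>\<^bsub>L\<^esub> z"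
    by (elim carrier_localizationE) (simp add: add_frac mult_frac mem_simps,
        rule frac_eqI, simp_all add: mem_simps m_ac a_ac l_distr r_distr)
qed

lemma frac_one_ring_hom: "(\<lambda>a. frac A S a \<one>) \<in> ring_hom A L"
  by (rule ring_hom_memI) (simp_all add: frac_closed mult_frac add_frac one_localization mem_simps)

lemma frac_eq_mult: "a \<in> carrier A \<Longrightarrow> s \<in> S \<Longrightarrow> frac A S a s = frac A S a \<one> \<otimes>\<^bsub>L\<^esub> frac A S \<one> s"
  by (simp add: mult_frac mem_simps)

context
  fixes \<nu> :: "'a \<Rightarrow> 'g::linordered_ab_group_add option"
  assumes pv: "pre_valuation A \<nu>" and finite_on_S: "\<forall>s\<in>S. \<nu> s \<noteq> None"
begin

lemma loc_val_frac:
  assumes "a \<in> carrier A" "s \<in> S"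
  shows "loc_val \<nu> (frac A S a s) = vsub (\<nu> a) (\<nu> s)"
proof -
  define p where "p = loc_rep (frac A S a s)"
  have p: "fst p \<in> carrier A" "snd p \<in> S" "((a, s), (fst p, snd p)) \<in> loc_rel A S"
    using loc_rep_frac[OF assms] unfolding p_def by auto
  then obtain u where u: "u \<in> S" "u \<otimes> (a \<otimes> snd p) = u \<otimes> (fst p \<otimes> s)"
    unfolding loc_rel_iff by blast
  obtain k where k: "\<nu> u = Some k" using finite_on_S u(1) by auto
  have "vadd (\<nu> u) (\<nu> (a \<otimes> snd p)) = vadd (\<nu> u) (\<nu> (fst p \<otimes> s))"
    using u p assms pre_valuation_mult[OF pv] mem_carrier by (metis m_closed)
  then have "\<nu> (a \<otimes> snd p) = \<nu> (fst p \<otimes> s)"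
    unfolding k by (rule vadd_left_cancel)
  then have "vadd (\<nu> a) (\<nu> (snd p)) = vadd (\<nu> (fst p)) (\<nu> s)"
    using pre_valuation_mult[OF pv] p assms mem_carrier by metis
  moreover obtain t1 t2 where "\<nu> s = Some t1" "\<nu> (snd p) = Some t2"
    using finite_on_S assms(2) p(2) by blast
  ultimately show ?thesis
    unfolding loc_val_def p_def[symmetric] by (metis vsub_eq_vsub)
qed

lemma pre_valuation_localization: "pre_valuation L (loc_val \<nu>)"
  unfolding pre_valuation_def
proof (intro conjI ballI allI impI)
  fix x y assume "x \<in> carrier L" "y \<in> carrier L"
  then obtain a s c t where as: "a \<in> carrier A" "s \<in> S" "x = frac A S a s"
    and ct: "c \<in> carrier A" "t \<in> S" "y = frac A S c t"
    by (metis carrier_localizationE)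
  obtain p q where pq: "\<nu> s = Some p" "\<nu> t = Some q" using finite_on_S as ct by blast
  have st: "\<nu> (s \<otimes> t) = Some (p + q)"
    using pq pre_valuation_mult[OF pv] as ct mem_carrier by simp
  show "loc_val \<nu> (x \<otimes>\<^bsub>L\<^esub> y) = vadd (loc_val \<nu> x) (loc_val \<nu> y)"
    using as ct pq st
    by (simp add: mult_frac loc_val_frac mem_simps pre_valuation_mult[OF pv] vsub_vadd_distrib)
  fix e assume "vle e (loc_val \<nu> x) \<and> vle e (loc_val \<nu> y)"
  then have "vle (vadd e (Some p)) (\<nu> a)" "vle (vadd e (Some q)) (\<nu> c)"
    using as ct pq by (simp_all add: loc_val_frac vle_vsub_iff)
  then have "vle (vadd (vadd e (Some p)) (Some q)) (vadd (\<nu> a) (Some q))"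
    "vle (vadd (vadd e (Some q)) (Some p)) (vadd (\<nu> c) (Some p))"
    using vadd_left_mono by blast+
  then have "vle (vadd e (Some (p + q))) (\<nu> (a \<otimes> t))"
    "vle (vadd e (Some (p + q))) (\<nu> (c \<otimes> s))"
    using as ct pq mem_carrier pre_valuation_mult[OF pv]
    by (cases e; simp add: ac_simps)+
  then have "vle (vadd e (Some (p + q))) (\<nu> (a \<otimes> t \<oplus> c \<otimes> s))"
    using pre_valuation_add[OF pv] as ct mem_carrier by simp
  then show "vle e (loc_val \<nu> (x \<oplus>\<^bsub>L\<^esub> y))"
    using as ct st by (simp add: add_frac loc_val_frac mem_simps vle_vsub_iff)
next
  show "loc_val \<nu> \<one>\<^bsub>L\<^esub> = Some 0" "loc_val \<nu> \<zero>\<^bsub>L\<^esub> = None"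
    using pre_valuation_one[OF pv] pre_valuation_zero[OF pv]
    by (simp_all add: one_localization zero_localization loc_val_frac mem_simps)
qed

end

end

section \<open>The affine part of the local blowing up\<close>

lemma multiplicative_subset_powers:
  fixes A (structure)
  assumes "cring A" "b \<in> carrier A"
  shows "multiplicative_subset A (powers A b)"
proof -
  interpret cring A by fact
  show ?thesis
  proof
    show "powers A b \<subseteq> carrier A" "\<one> \<in> powers A b"
      using assms(2) by (auto simp: powers_def intro!: exI[of _ "0::nat"])
    show "s \<otimes> t \<in> powers A b" if "s \<in> powers A b" "t \<in> powers A b" for s t
      using that assms(2) by (auto simp: powers_def nat_pow_mult)
  qed
qed

lemma pre_valuation_powers_finite:
  fixes A (structure)
  assumes "ring A" "pre_valuation A \<nu>" "b \<in> carrier A" "\<nu> b \<noteq> None" "s \<in> powers A b"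
  shows "\<nu> s \<noteq> None"
proof -
  interpret ring A by fact
  obtain n :: nat where "s = b [^] n" using assms(5) by (auto simp: powers_def)
  moreover have "\<nu> (b [^] n) \<noteq> None" for n :: nat
    by (induction n) (use assms(3,4) pre_valuation_one[OF assms(2)] pre_valuation_mult[OF assms(2)] in auto)
  ultimately show ?thesis by simp
qed

lemma blowup_aff_generators_subset:
  assumes "cring A" "b \<in> carrier A" "Y \<subseteq> carrier A"
  shows "(\<lambda>a. frac A (powers A b) a \<one>\<^bsub>A\<^esub>) ` carrier A \<union> (\<lambda>a. frac A (powers A b) a b) ` Y
           \<subseteq> carrier (localization A (powers A b))"
proof -
  interpret multiplicative_subset A "powers A b"
    by (rule multiplicative_subset_powers[OF assms(1,2)])
  have "b \<in> powers A b" using assms(2) by (auto simp: powers_def intro!: exI[of _ "1::nat"])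
  then show ?thesis using assms(3) frac_closed one_mem by auto
qed

lemma carrier_blowup_aff_subset:
  assumes "cring A" "b \<in> carrier A" "Y \<subseteq> carrier A"
  shows "carrier (blowup_aff A b Y) \<subseteq> carrier (localization A (powers A b))"
proof -
  interpret multiplicative_subset A "powers A b"
    by (rule multiplicative_subset_powers[OF assms(1,2)])
  interpret L: cring L by (rule cring_localization)
  show ?thesis
    unfolding blowup_aff_def
    using L.generate_ring_incl[OF blowup_aff_generators_subset[OF assms]] by simp
qed

lemma cring_blowup_aff:
  assumes "cring A" "b \<in> carrier A" "Y \<subseteq> carrier A"
  shows "cring (blowup_aff A b Y)"
proof -
  interpret multiplicative_subset A "powers A b"
    by (rule multiplicative_subset_powers[OF assms(1,2)])
  interpret L: cring L by (rule cring_localization)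
  show ?thesis
    unfolding blowup_aff_def
    using L.subcring_iff[OF L.generate_ring_incl] L.subcringI'[OF L.generate_ring_is_subring]
      blowup_aff_generators_subset[OF assms] by simp
qed

lemma pre_valuation_blowup_aff:
  assumes "cring A" "pre_valuation A \<nu>" "b \<in> carrier A" "\<nu> b \<noteq> None" "Y \<subseteq> carrier A"
  shows "pre_valuation (blowup_aff A b Y) (loc_val \<nu>)"
proof -
  interpret multiplicative_subset A "powers A b"
    by (rule multiplicative_subset_powers[OF assms(1,3)])
  have "\<forall>s\<in>powers A b. \<nu> s \<noteq> None"
    using pre_valuation_powers_finite[OF ring_axioms assms(2-4)] by blast
  then have "pre_valuation L (loc_val \<nu>)"
    by (rule pre_valuation_localization[OF assms(2)])
  then have "pre_valuation (L\<lparr>carrier := carrier (blowup_aff A b Y)\<rparr>) (loc_val \<nu>)"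
    using pre_valuation_subring carrier_blowup_aff_subset[OF assms(1,3,5)] by blast
  then show ?thesis by (simp add: blowup_aff_def)
qed

lemma blowup_aff_nonneg:
  fixes A (structure)
  assumes "cring A" "pre_valuation A \<nu>" "\<forall>a\<in>carrier A. vle (Some 0) (\<nu> a)"
    and "b \<in> carrier A" "\<nu> b = Some \<beta>" "Y \<subseteq> carrier A" "\<forall>y\<in>Y. vle (Some \<beta>) (\<nu> y)"
    and "u \<in> carrier (blowup_aff A b Y)"
  shows "vle (Some 0) (loc_val \<nu> u)"
proof -
  interpret multiplicative_subset A "powers A b"
    by (rule multiplicative_subset_powers[OF assms(1,4)])
  have finite: "\<forall>s\<in>powers A b. \<nu> s \<noteq> None"
    using pre_valuation_powers_finite[OF ring_axioms assms(2,4)] assms(5) by blast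
  have b: "b \<in> powers A b" using assms(4) by (auto simp: powers_def intro!: exI[of _ "1::nat"])
  have "\<forall>h\<in>(\<lambda>a. frac A (powers A b) a \<one>) ` carrier A \<union> (\<lambda>a. frac A (powers A b) a b) ` Y.
          vle (Some 0) (loc_val \<nu> h)"
  proof
    fix h assume "h \<in> (\<lambda>a. frac A (powers A b) a \<one>) ` carrier A \<union> (\<lambda>a. frac A (powers A b) a b) ` Y"
    then consider a where "a \<in> carrier A" "h = frac A (powers A b) a \<one>"
      | y where "y \<in> Y" "h = frac A (powers A b) y b"
      by blast
    then show "vle (Some 0) (loc_val \<nu> h)"
    proof cases
      case 1
      then show ?thesis
        using assms(3) one_mem pre_valuation_one[OF assms(2)] by (simp add: loc_val_frac[OF assms(2) finite])
    next
      case 2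
      then have "loc_val \<nu> h = vsub (\<nu> y) (Some \<beta>)"
        using assms(5,6) b by (auto simp: loc_val_frac[OF assms(2) finite])
      then show ?thesis
        using assms(7) 2(1) by (simp add: vle_vsub_iff)
    qed
  qed
  moreover have "u \<in> generate_ring L ((\<lambda>a. frac A (powers A b) a \<one>) ` carrier A \<union> (\<lambda>a. frac A (powers A b) a b) ` Y)"
    using assms(8) by (simp add: blowup_aff_def)
  ultimately show ?thesis
    using pre_valuation_nonneg_generate_ring[OF cring.axioms(1)[OF cring_localization]
        pre_valuation_localization[OF assms(2) finite] blowup_aff_generators_subset[OF assms(1,4,6)]]
    by blast
qed

lemma ring_hom_into_generate_ring:
  assumes "h \<in> ring_hom A L" "h ` carrier A \<subseteq> H"
  shows "h \<in> ring_hom A (L\<lparr>carrier := generate_ring L H\<rparr>)"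
  using assms unfolding ring_hom_def by (auto intro: generate_ring.incl)

lemma subring_of_subring:
  assumes "ring L" "subring G L" "subring E (L\<lparr>carrier := G\<rparr>)"
  shows "subring E L"
proof -
  interpret L: ring L by fact
  have "ring (L\<lparr>carrier := G\<rparr>\<lparr>carrier := E\<rparr>)"
    using ring.subring_is_ring[OF L.subring_is_ring[OF assms(2)] assms(3)] .
  moreover have "E \<subseteq> carrier L"
    using subringE(1)[OF assms(2)] subringE(1)[OF assms(3)] by simp
  ultimately show ?thesis
    by (intro L.ring_incl_imp_subring) simp_all
qed

lemma (in ring_hom_ring) image_plus_ideal_subring:
  assumes "ideal J S"
  shows "subring {u \<in> carrier S. \<exists>a\<in>carrier R. u \<ominus>\<^bsub>S\<^esub> h a \<in> J} S"
proof -
  interpret J: ideal J S by fact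
  show ?thesis
  proof (rule S.subringI)
    have "\<one>\<^bsub>S\<^esub> \<ominus>\<^bsub>S\<^esub> h \<one> \<in> J"
      using J.zero_closed by (simp add: S.minus_eq S.r_neg)
    then show "\<one>\<^bsub>S\<^esub> \<in> {u \<in> carrier S. \<exists>a\<in>carrier R. u \<ominus>\<^bsub>S\<^esub> h a \<in> J}"
      by blast
  next
    fix u assume "u \<in> {u \<in> carrier S. \<exists>a\<in>carrier R. u \<ominus>\<^bsub>S\<^esub> h a \<in> J}"
    then obtain a where u: "u \<in> carrier S" and a: "a \<in> carrier R" "u \<ominus>\<^bsub>S\<^esub> h a \<in> J" by blast
    have "\<ominus>\<^bsub>S\<^esub> u \<ominus>\<^bsub>S\<^esub> h (\<ominus> a) = \<ominus>\<^bsub>S\<^esub> (u \<ominus>\<^bsub>S\<^esub> h a)"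
      using u a(1) hom_closed[OF a(1)] by (simp only: hom_a_inv) algebra
    then have "\<ominus>\<^bsub>S\<^esub> u \<ominus>\<^bsub>S\<^esub> h (\<ominus> a) \<in> J"
      using J.a_inv_closed[OF a(2)] by simp
    then show "\<ominus>\<^bsub>S\<^esub> u \<in> {u \<in> carrier S. \<exists>a\<in>carrier R. u \<ominus>\<^bsub>S\<^esub> h a \<in> J}"
      using u a(1) by blast
  next
    fix u v
    assume "u \<in> {u \<in> carrier S. \<exists>a\<in>carrier R. u \<ominus>\<^bsub>S\<^esub> h a \<in> J}"
      "v \<in> {u \<in> carrier S. \<exists>a\<in>carrier R. u \<ominus>\<^bsub>S\<^esub> h a \<in> J}"
    then obtain a c where uv: "u \<in> carrier S" "v \<in> carrier S"
      and ac: "a \<in> carrier R" "c \<in> carrier R" "u \<ominus>\<^bsub>S\<^esub> h a \<in> J" "v \<ominus>\<^bsub>S\<^esub> h c \<in> J"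
      by blast
    note closed = uv hom_closed[OF ac(1)] hom_closed[OF ac(2)]
    have "u \<otimes>\<^bsub>S\<^esub> v \<ominus>\<^bsub>S\<^esub> h (a \<otimes> c)
        = u \<otimes>\<^bsub>S\<^esub> (v \<ominus>\<^bsub>S\<^esub> h c) \<oplus>\<^bsub>S\<^esub> (u \<ominus>\<^bsub>S\<^esub> h a) \<otimes>\<^bsub>S\<^esub> h c"
      using closed ac(1,2) by (simp only: hom_mult) algebra
    moreover have "u \<otimes>\<^bsub>S\<^esub> (v \<ominus>\<^bsub>S\<^esub> h c) \<oplus>\<^bsub>S\<^esub> (u \<ominus>\<^bsub>S\<^esub> h a) \<otimes>\<^bsub>S\<^esub> h c \<in> J"
      using closed ac(3,4) by (simp add: J.a_closed J.I_l_closed J.I_r_closed)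
    ultimately have "u \<otimes>\<^bsub>S\<^esub> v \<ominus>\<^bsub>S\<^esub> h (a \<otimes> c) \<in> J" by simp
    then show "u \<otimes>\<^bsub>S\<^esub> v \<in> {u \<in> carrier S. \<exists>a\<in>carrier R. u \<ominus>\<^bsub>S\<^esub> h a \<in> J}"
      using uv ac(1,2) by blast
    have "u \<oplus>\<^bsub>S\<^esub> v \<ominus>\<^bsub>S\<^esub> h (a \<oplus> c) = (u \<ominus>\<^bsub>S\<^esub> h a) \<oplus>\<^bsub>S\<^esub> (v \<ominus>\<^bsub>S\<^esub> h c)"
      using closed ac(1,2) by (simp only: hom_add) algebra
    then have "u \<oplus>\<^bsub>S\<^esub> v \<ominus>\<^bsub>S\<^esub> h (a \<oplus> c) \<in> J"
      using J.a_closed[OF ac(3,4)] by simp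
    then show "u \<oplus>\<^bsub>S\<^esub> v \<in> {u \<in> carrier S. \<exists>a\<in>carrier R. u \<ominus>\<^bsub>S\<^esub> h a \<in> J}"
      using uv ac(1,2) by blast
  qed auto
qed

lemma generate_ring_image_mod_ideal:
  assumes "ring A" "cring L" "h \<in> ring_hom A L" "T \<subseteq> carrier L"
    and G: "G = generate_ring L (h ` carrier A \<union> T)"
    and J: "ideal J (L\<lparr>carrier := G\<rparr>)" "T \<subseteq> J"
    and u: "u \<in> G"
  shows "\<exists>a\<in>carrier A. u \<ominus>\<^bsub>L\<lparr>carrier := G\<rparr>\<^esub> h a \<in> J"
proof -
  interpret L: cring L by fact
  define R' where "R' = L\<lparr>carrier := G\<rparr>"
  define E where "E = {u \<in> carrier R'. \<exists>a\<in>carrier A. u \<ominus>\<^bsub>R'\<^esub> h a \<in> J}"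
  have gens: "h ` carrier A \<union> T \<subseteq> carrier L"
    using ring_hom_closed[OF assms(3)] assms(4) by auto
  have G_subring: "subring G L"
    unfolding G by (rule L.generate_ring_is_subring[OF gens])
  interpret R': ring R'
    unfolding R'_def by (rule L.subring_is_ring[OF G_subring])
  have "h \<in> ring_hom A R'"
    unfolding R'_def G by (rule ring_hom_into_generate_ring[OF assms(3)]) blast
  then interpret h: ring_hom_ring A R' h
    by (rule ring_hom_ringI2[OF assms(1) R'.ring_axioms])
  interpret J: ideal J R'
    using J(1) by (simp add: R'_def)
  have "subring E R'"
    unfolding E_def by (rule h.image_plus_ideal_subring[OF J.is_ideal])
  then have "subring E L"
    unfolding R'_def by (rule subring_of_subring[OF L.ring_axioms G_subring])
  moreover have "h ` carrier A \<union> T \<subseteq> E"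
  proof -
    have "h a \<in> E" if "a \<in> carrier A" for a
    proof -
      have "h a \<ominus>\<^bsub>R'\<^esub> h a \<in> J"
        using that J.zero_closed by (simp add: R'.minus_eq R'.r_neg)
      then show ?thesis using that by (auto simp: E_def)
    qed
    moreover have "t \<in> E" if "t \<in> T" for t
    proof -
      have "t \<in> carrier R'" using that J(2) J.Icarr by blast
      then have "t \<ominus>\<^bsub>R'\<^esub> h \<zero>\<^bsub>A\<^esub> = t" by (simp add: R'.minus_eq)
      then show ?thesis using that J(2) \<open>t \<in> carrier R'\<close> unfolding E_def by force
    qed
    ultimately show ?thesis by blast
  qed
  ultimately have "G \<subseteq> E"
    unfolding G by (rule L.generate_ring_min_subring1[OF gens])
  then show ?thesis using u by (auto simp: E_def R'_def)
qed

lemma multiplicative_subset_compl_center: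
  assumes "cring A" "pre_valuation A \<nu>" "\<forall>a\<in>carrier A. vle (Some 0) (\<nu> a)"
  shows "multiplicative_subset A (carrier A - center A \<nu>)"
    and "s \<in> carrier A - center A \<nu> \<Longrightarrow> \<nu> s = Some 0"
proof -
  show value_zero: "\<nu> s = Some 0" if "s \<in> carrier A - center A \<nu>" for s
    using that assms(3) unfolding center_def vless_def by auto
  interpret cring A by fact
  show "multiplicative_subset A (carrier A - center A \<nu>)"
  proof
    show "carrier A - center A \<nu> \<subseteq> carrier A" "\<one>\<^bsub>A\<^esub> \<in> carrier A - center A \<nu>"
      using pre_valuation_one[OF assms(2)] by (auto simp: center_def)
    show "s \<otimes>\<^bsub>A\<^esub> t \<in> carrier A - center A \<nu>"
      if "s \<in> carrier A - center A \<nu>" "t \<in> carrier A - center A \<nu>" for s t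
    proof -
      have "\<nu> (s \<otimes>\<^bsub>A\<^esub> t) = Some 0"
        using that value_zero[OF that(1)] value_zero[OF that(2)] pre_valuation_mult[OF assms(2)] by simp
      then show ?thesis using that by (simp add: center_def)
    qed
  qed
qed

lemma (in multiplicative_subset) frac_one_mem_genideal_image:
  assumes "V \<subseteq> carrier A" "a \<in> Idl V"
  shows "frac A S a \<one> \<in> Idl\<^bsub>L\<^esub> ((\<lambda>x. frac A S x \<one>) ` V)"
proof -
  interpret L: cring L by (rule cring_localization)
  have image_carrier: "(\<lambda>x. frac A S x \<one>) ` V \<subseteq> carrier L"
    using assms(1) frac_closed one_mem by auto
  have "ideal {x \<in> carrier A. frac A S x \<one> \<in> Idl\<^bsub>L\<^esub> ((\<lambda>x. frac A S x \<one>) ` V)} A"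
    by (rule ring_hom_ring.ideal_vimage[OF ring_hom_ringI2[OF ring_axioms L.ring_axioms frac_one_ring_hom]
        L.genideal_ideal[OF image_carrier]])
  moreover have "V \<subseteq> {x \<in> carrier A. frac A S x \<one> \<in> Idl\<^bsub>L\<^esub> ((\<lambda>x. frac A S x \<one>) ` V)}"
    using assms(1) L.genideal_self[OF image_carrier] by blast
  ultimately show ?thesis
    using genideal_minimal assms(2) by blast
qed

text \<open>The denominators have value \<open>0\<close>, so \<open>\<nu>(u/s) = \<nu>(u)\<close>.\<close>
theorem center1_localization_compl_center:
  fixes A (structure)
  assumes A: "cring A" and pv: "pre_valuation A \<nu>" and nonneg: "\<forall>a\<in>carrier A. vle (Some 0) (\<nu> a)"
    and V: "V \<subseteq> carrier A" "Idl V = center1 A \<nu> \<Delta>"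
  shows "Idl\<^bsub>localization A (carrier A - center A \<nu>)\<^esub> ((\<lambda>x. frac A (carrier A - center A \<nu>) x \<one>) ` V)
           = center1 (localization A (carrier A - center A \<nu>)) (loc_val \<nu>) \<Delta>"
proof -
  interpret cring A by (rule A)
  define S where "S = carrier A - center A \<nu>"
  interpret S: multiplicative_subset A S
    unfolding S_def by (rule multiplicative_subset_compl_center(1)[OF A pv nonneg])
  have value_zero: "\<nu> s = Some 0" if "s \<in> S" for s
    using multiplicative_subset_compl_center(2)[OF A pv nonneg] that by (simp add: S_def)
  then have finite: "\<forall>s\<in>S. \<nu> s \<noteq> None" by simp
  have val: "loc_val \<nu> (frac A S a s) = \<nu> a" if "a \<in> carrier A" "s \<in> S" for a s
    using that value_zero by (simp add: S.loc_val_frac[OF pv finite])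
  interpret L: cring S.L by (rule S.cring_localization)
  have nonneg_L: "\<forall>x\<in>carrier S.L. vle (Some 0) (loc_val \<nu> x)"
  proof
    fix x assume "x \<in> carrier S.L"
    then obtain a s where "a \<in> carrier A" "s \<in> S" "x = frac A S a s"
      by (rule S.carrier_localizationE)
    then show "vle (Some 0) (loc_val \<nu> x)" using nonneg val by simp
  qed
  have C_ideal: "ideal (center1 S.L (loc_val \<nu>) \<Delta>) S.L"
    by (rule center1_ideal[OF L.is_cring S.pre_valuation_localization[OF pv finite] nonneg_L])
  define \<iota> where "\<iota> = (\<lambda>x. frac A S x \<one>)"
  have \<iota>_carrier: "\<iota> ` V \<subseteq> carrier S.L"
    using V(1) S.frac_closed S.one_mem by (auto simp: \<iota>_def)
  interpret J: ideal "Idl\<^bsub>S.L\<^esub> (\<iota> ` V)" S.L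
    by (rule L.genideal_ideal[OF \<iota>_carrier])
  have "\<iota> ` V \<subseteq> center1 S.L (loc_val \<nu>) \<Delta>"
  proof
    fix y assume "y \<in> \<iota> ` V"
    then obtain v where v: "v \<in> V" "y = \<iota> v" by blast
    then have "v \<in> center1 A \<nu> \<Delta>" using genideal_self[OF V(1)] V(2) by blast
    moreover have "loc_val \<nu> y = \<nu> v" using v V(1) val S.one_mem by (auto simp: \<iota>_def)
    moreover have "y \<in> carrier S.L" using v \<iota>_carrier by blast
    ultimately show "y \<in> center1 S.L (loc_val \<nu>) \<Delta>" unfolding center1_def by simp
  qed
  then have J_center: "Idl\<^bsub>S.L\<^esub> (\<iota> ` V) \<subseteq> center1 S.L (loc_val \<nu>) \<Delta>"
    by (rule L.genideal_minimal[OF C_ideal])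
  have "center1 S.L (loc_val \<nu>) \<Delta> \<subseteq> Idl\<^bsub>S.L\<^esub> (\<iota> ` V)"
  proof
    fix x assume x: "x \<in> center1 S.L (loc_val \<nu>) \<Delta>"
    then have "x \<in> carrier S.L" unfolding center1_def by blast
    then obtain u s where us: "u \<in> carrier A" "s \<in> S" "x = frac A S u s"
      by (rule S.carrier_localizationE)
    have "loc_val \<nu> x = \<nu> u" using us val by simp
    then have "u \<in> center1 A \<nu> \<Delta>"
      using x us(1) unfolding center1_def by auto
    then have "\<iota> u \<in> Idl\<^bsub>S.L\<^esub> (\<iota> ` V)"
      using S.frac_one_mem_genideal_image[OF V(1)] V(2) unfolding \<iota>_def by blast
    moreover have "x = \<iota> u \<otimes>\<^bsub>S.L\<^esub> frac A S \<one> s"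
      unfolding us(3) \<iota>_def by (rule S.frac_eq_mult[OF us(1,2)])
    ultimately show "x \<in> Idl\<^bsub>S.L\<^esub> (\<iota> ` V)"
      using J.I_r_closed S.frac_closed us(2) S.one_mem by simp
  qed
  with J_center show ?thesis
    unfolding S_def \<iota>_def by blast
qed

section \<open>The center of \<open>\<nu>\<^sub>1\<close> on the local blowing up\<close>

text \<open>\<open>Y\<close> are the elements \<open>y\<^sub>1, \<dots>, y\<^sub>r\<close> that get divided by \<open>b\<close>, \<open>Z\<close> the remaining generators
  \<open>y\<^sub>r\<^sub>+\<^sub>1, \<dots>, y\<^sub>r\<^sub>+\<^sub>s\<close> of the center of \<open>\<nu>\<^sub>1\<close> on \<open>A\<close>.\<close>
locale blowup_data = cring A for A (structure) +
  fixes \<nu> :: "'a \<Rightarrow> 'g::linordered_ab_group_add option" and \<Delta> :: "'g set"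
    and b :: 'a and \<beta> :: 'g and Y Z :: "'a set"
  assumes pv: "pre_valuation A \<nu>" and nonneg: "\<forall>a\<in>carrier A. vle (Some 0) (\<nu> a)"
    and \<Delta>: "add_subgroup \<Delta>"
    and b: "b \<in> carrier A" "\<nu> b = Some \<beta>" "\<beta> \<in> \<Delta>"
    and YZ: "Y \<subseteq> carrier A" "Z \<subseteq> carrier A" "Idl (Y \<union> Z) = center1 A \<nu> \<Delta>"
begin

abbreviation R' where "R' \<equiv> blowup_aff A b Y"

abbreviation incl where "incl a \<equiv> frac A (powers A b) a \<one>"

abbreviation gens where "gens \<equiv> (\<lambda>a. frac A (powers A b) a b) ` Y \<union> incl ` Z"

sublocale loc: multiplicative_subset A "powers A b"
  by (rule multiplicative_subset_powers[OF is_cring b(1)])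

sublocale aff: cring R'
  by (rule cring_blowup_aff[OF is_cring b(1) YZ(1)])

lemma powers_finite: "\<forall>s\<in>powers A b. \<nu> s \<noteq> None"
  using pre_valuation_powers_finite[OF ring_axioms pv b(1)] b(2) by blast

lemma b_mem_powers: "b \<in> powers A b"
  using b(1) by (auto simp: powers_def intro!: exI[of _ "1::nat"])

lemma generators_center1: "Y \<union> Z \<subseteq> center1 A \<nu> \<Delta>"
  using genideal_self[of "Y \<union> Z"] YZ by auto

lemma carrier_R': "carrier R' = generate_ring loc.L (incl ` carrier A \<union> (\<lambda>a. frac A (powers A b) a b) ` Y)"
  by (simp add: blowup_aff_def)

lemma R'_eq: "loc.L\<lparr>carrier := carrier R'\<rparr> = R'"
  by (simp add: blowup_aff_def)

lemma pre_valuation_R': "pre_valuation R' (loc_val \<nu>)"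
  by (rule pre_valuation_blowup_aff[OF is_cring pv b(1) _ YZ(1)]) (simp add: b(2))

lemma nonneg_R': "\<forall>u\<in>carrier R'. vle (Some 0) (loc_val \<nu> u)"
proof -
  have "vle (Some \<beta>) (\<nu> y)" if "y \<in> Y" for y
  proof (rule vless_imp_vle)
    show "vless (Some \<beta>) (\<nu> y)" using generators_center1 that b(3) by (auto simp: center1_def)
  qed
  then show ?thesis
    using blowup_aff_nonneg[OF is_cring pv nonneg b(1,2) YZ(1)] by blast
qed

lemma loc_val_incl: "a \<in> carrier A \<Longrightarrow> loc_val \<nu> (incl a) = \<nu> a"
  using loc.one_mem pre_valuation_one[OF pv] by (simp add: loc.loc_val_frac[OF pv powers_finite])

lemma incl_carrier: "a \<in> carrier A \<Longrightarrow> incl a \<in> carrier R'"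
  unfolding carrier_R' by (simp add: generate_ring.incl)

lemma incl_ring_hom: "incl \<in> ring_hom A R'"
  unfolding blowup_aff_def by (rule ring_hom_into_generate_ring[OF loc.frac_one_ring_hom]) blast

lemma gens_carrier: "gens \<subseteq> carrier R'"
  using incl_carrier YZ(2) unfolding carrier_R' by (auto intro: generate_ring.incl)

lemma gens_center1: "gens \<subseteq> center1 R' (loc_val \<nu>) \<Delta>"
proof
  fix g assume g: "g \<in> gens"
  then have g_carrier: "g \<in> carrier R'" using gens_carrier by blast
  from g consider y where "y \<in> Y" "g = frac A (powers A b) y b" | z where "z \<in> Z" "g = incl z"
    by blast
  then show "g \<in> center1 R' (loc_val \<nu>) \<Delta>"
  proof cases
    case 1
    have "loc_val \<nu> g = vsub (\<nu> y) (Some \<beta>)"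
      using 1 YZ(1) b_mem_powers b(2) by (auto simp: loc.loc_val_frac[OF pv powers_finite])
    moreover have "vless (Some (\<delta> + \<beta>)) (\<nu> y)" if "\<delta> \<in> \<Delta>" for \<delta>
    proof -
      have "\<delta> - (0 - \<beta>) \<in> \<Delta>" using \<Delta> that b(3) unfolding add_subgroup_def by blast
      then show ?thesis using 1(1) generators_center1 by (auto simp: center1_def)
    qed
    ultimately show ?thesis using g_carrier by (simp add: center1_def vless_vsub_iff)
  next
    case 2
    then show ?thesis
      using generators_center1 g_carrier loc_val_incl YZ(2) by (auto simp: center1_def)
  qed
qed

text \<open>Since \<open>y = b \<cdot> (y/b)\<close>, the preimage of \<open>J\<close> in \<open>A\<close> contains \<open>Y \<union> Z\<close>, hence \<open>p\<close>.\<close>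
lemma incl_center1_mem:
  assumes J: "ideal J R'" "gens \<subseteq> J" and a: "a \<in> center1 A \<nu> \<Delta>"
  shows "incl a \<in> J"
proof -
  interpret J: ideal J R' by (rule J(1))
  have "ideal {x \<in> carrier A. incl x \<in> J} A"
    by (rule ring_hom_ring.ideal_vimage[OF ring_hom_ringI2[OF ring_axioms aff.ring_axioms incl_ring_hom] J(1)])
  moreover have "incl y \<in> J" if "y \<in> Y" for y
  proof -
    have y: "y \<in> carrier A" using that YZ(1) by blast
    have "incl b \<otimes>\<^bsub>R'\<^esub> frac A (powers A b) y b = frac A (powers A b) (b \<otimes> y) (\<one> \<otimes> b)"
      using y b(1) b_mem_powers loc.one_mem by (simp add: blowup_aff_def loc.mult_frac)
    also have "\<dots> = incl y"
      by (rule loc.frac_eqI) (use y b(1) b_mem_powers loc.one_mem in \<open>simp_all add: m_ac\<close>)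
    finally have "incl y = incl b \<otimes>\<^bsub>R'\<^esub> frac A (powers A b) y b" ..
    moreover have "frac A (powers A b) y b \<in> J" using that J(2) by blast
    ultimately show ?thesis using J.I_l_closed incl_carrier[OF b(1)] by simp
  qed
  moreover have "incl z \<in> J" if "z \<in> Z" for z
    using that J(2) by blast
  ultimately have "Idl (Y \<union> Z) \<subseteq> {x \<in> carrier A. incl x \<in> J}"
    using YZ(1,2) genideal_minimal[of "{x \<in> carrier A. incl x \<in> J}" "Y \<union> Z"] by blast
  then show ?thesis using a unfolding YZ(3) by blast
qed

theorem center1_blowup_aff: "Idl\<^bsub>R'\<^esub> gens = center1 R' (loc_val \<nu>) \<Delta>"
proof -
  define J where "J = Idl\<^bsub>R'\<^esub> gens"
  interpret J: ideal J R'
    unfolding J_def by (rule aff.genideal_ideal[OF gens_carrier])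
  interpret C: ideal "center1 R' (loc_val \<nu>) \<Delta>" R'
    by (rule center1_ideal[OF aff.is_cring pre_valuation_R' nonneg_R'])
  have gens_J: "gens \<subseteq> J"
    unfolding J_def by (rule aff.genideal_self[OF gens_carrier])
  have J_center: "J \<subseteq> center1 R' (loc_val \<nu>) \<Delta>"
    unfolding J_def by (rule aff.genideal_minimal[OF C.is_ideal gens_center1])
  have "center1 R' (loc_val \<nu>) \<Delta> \<subseteq> J"
  proof
    fix u assume u: "u \<in> center1 R' (loc_val \<nu>) \<Delta>"
    then have u_carrier: "u \<in> carrier R'" using C.Icarr by blast
    have "(\<lambda>a. frac A (powers A b) a b) ` Y \<subseteq> carrier loc.L"
      using YZ(1) b_mem_powers by (auto simp: loc.frac_closed)
    moreover have "ideal J (loc.L\<lparr>carrier := carrier R'\<rparr>)"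
      unfolding R'_eq by (rule J.is_ideal)
    moreover have "(\<lambda>a. frac A (powers A b) a b) ` Y \<subseteq> J"
      using gens_J by blast
    ultimately have "\<exists>a\<in>carrier A. u \<ominus>\<^bsub>loc.L\<lparr>carrier := carrier R'\<rparr>\<^esub> incl a \<in> J"
      by (rule generate_ring_image_mod_ideal[OF ring_axioms loc.cring_localization loc.frac_one_ring_hom
          _ carrier_R' _ _ u_carrier])
    then obtain a where a: "a \<in> carrier A" "u \<ominus>\<^bsub>R'\<^esub> incl a \<in> J"
      unfolding R'_eq by blast
    have "incl a = u \<oplus>\<^bsub>R'\<^esub> \<ominus>\<^bsub>R'\<^esub> (u \<ominus>\<^bsub>R'\<^esub> incl a)"
      using u_carrier incl_carrier[OF a(1)] by algebra
    also have "\<dots> \<in> center1 R' (loc_val \<nu>) \<Delta>"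
      using C.a_closed[OF u C.a_inv_closed] J_center a(2) by blast
    finally have "\<forall>\<delta>\<in>\<Delta>. vless (Some \<delta>) (loc_val \<nu> (incl a))"
      unfolding center1_def by blast
    then have "a \<in> center1 A \<nu> \<Delta>"
      using a(1) loc_val_incl[OF a(1)] unfolding center1_def by auto
    then have "(u \<ominus>\<^bsub>R'\<^esub> incl a) \<oplus>\<^bsub>R'\<^esub> incl a \<in> J"
      using J.a_closed[OF a(2) incl_center1_mem[OF J.is_ideal gens_J]] by blast
    moreover have "(u \<ominus>\<^bsub>R'\<^esub> incl a) \<oplus>\<^bsub>R'\<^esub> incl a = u"
      using u_carrier incl_carrier[OF a(1)] by algebra
    ultimately show "u \<in> J" by simp
  qed
  with J_center show ?thesis unfolding J_def by blast
qed

theorem center1_blowup: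
  "Idl\<^bsub>blowup A \<nu> b Y\<^esub> (blowup_incl A \<nu> b Y ` gens) = center1 (blowup A \<nu> b Y) (blowup_val \<nu>) \<Delta>"
  using center1_localization_compl_center[OF aff.is_cring pre_valuation_R' nonneg_R' gens_carrier
      center1_blowup_aff]
  by (simp add: blowup_def blowup_val_def blowup_incl_def)

end

lemma value_mem_convex_subgroup:
  assumes "has_center A \<nu>" "convex_subgroup \<Delta> (value_group A \<nu>)"
    and "b \<in> carrier A" "b \<notin> center1 A \<nu> \<Delta>"
  obtains \<beta> where "\<nu> b = Some \<beta>" "\<beta> \<in> \<Delta>"
proof -
  obtain \<delta> where \<delta>: "\<delta> \<in> \<Delta>" "\<not> vless (Some \<delta>) (\<nu> b)"
    using assms(3,4) by (auto simp: center1_def)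
  then obtain \<beta> where \<beta>: "\<nu> b = Some \<beta>" by (cases "\<nu> b") auto
  have "0 \<le> \<beta>" using assms(1,3) \<beta> by (auto simp: has_center_def)
  moreover have "\<beta> \<le> \<delta>" using \<delta>(2) \<beta> by auto
  moreover have "\<beta> \<in> value_group A \<nu>" using assms(3) \<beta> by (auto simp: value_group_def)
  ultimately have "\<beta> \<in> \<Delta>" using assms(2) \<delta>(1) by (auto simp: convex_subgroup_def)
  with \<beta> show thesis by (rule that)
qed

lemma image_if_split_interval:
  fixes r s :: nat
  shows "(\<lambda>i. if i \<le> r then F (g (y i)) else F (h (y i))) ` {1..r + s}
     = F ` (g ` y ` {1..r} \<union> h ` y ` {r + 1..r + s})"
proof -
  have split: "{1..r + s} = {1..r} \<union> {r + 1..r + s}" by auto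
  have "(\<lambda>i. if i \<le> r then F (g (y i)) else F (h (y i))) ` {1..r} = (\<lambda>i. F (g (y i))) ` {1..r}"
    "(\<lambda>i. if i \<le> r then F (g (y i)) else F (h (y i))) ` {r + 1..r + s} = (\<lambda>i. F (h (y i))) ` {r + 1..r + s}"
    by (rule image_cong; simp)+
  then show ?thesis
    unfolding split image_Un image_image by simp
qed

theorem mainTheorem14:
  fixes R :: "('a, 'm) ring_scheme" and m :: "'a set"
    and \<nu> :: "'a \<Rightarrow> 'g::linordered_ab_group_add option"
    and \<Delta> :: "'g set" and y :: "nat \<Rightarrow> 'a" and r s :: nat and b :: 'a
  assumes "noetherian_ring R" and "local_ring R m"
    and "valuation R \<nu>" and "centered_on R m \<nu>"
    and "convex_subgroup \<Delta> (value_group R \<nu>)"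
    and "associated_primes R = {nilradical R}"
    and "y ` {1..r+s} \<subseteq> carrier R"
    and "Idl\<^bsub>R\<^esub> (y ` {1..r+s}) = center1 R \<nu> \<Delta>"
    and "b \<in> carrier R" and "b \<notin> center1 R \<nu> \<Delta>"
  shows "Idl\<^bsub>blowup R \<nu> b (y ` {1..r})\<^esub>
           ((\<lambda>i. if i \<le> r then blowup_incl R \<nu> b (y ` {1..r}) (frac R (powers R b) (y i) b)
                 else blowup_map R \<nu> b (y ` {1..r}) (y i)) ` {1..r+s})
         = center1 (blowup R \<nu> b (y ` {1..r})) (blowup_val \<nu>) \<Delta>"
proof -
  \<comment> \<open>Noetherianity and the hypothesis on associated primes serve in the paper only to make
     \<open>R \<rightarrow> R_b\<close> injective; \<open>blowup_aff\<close> is built inside \<open>R_b\<close> directly.\<close>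
  interpret R: cring R using assms(2) by (simp add: local_ring_def)
  have center: "has_center R \<nu>" using assms(4) by (simp add: centered_on_def)
  obtain \<beta> where \<beta>: "\<nu> b = Some \<beta>" "\<beta> \<in> \<Delta>"
    by (rule value_mem_convex_subgroup[OF center assms(5,9,10)])
  define Y Z where "Y = y ` {1..r}" and "Z = y ` {r + 1..r + s}"
  have "{1..r + s} = {1..r} \<union> {r + 1..r + s}" by auto
  then have YZ: "Y \<union> Z = y ` {1..r + s}" unfolding Y_def Z_def by (simp add: image_Un)
  then have "Y \<union> Z \<subseteq> carrier R" using assms(7) by simp
  then have YZ_carrier: "Y \<subseteq> carrier R" "Z \<subseteq> carrier R" by simp_all
  interpret blowup_data R \<nu> \<Delta> b \<beta> Y Z
    by (rule blowup_data.intro[OF R.is_cring blowup_data_axioms.intro])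
      (use valuation_imp_pre_valuation[OF assms(3)] center assms(5,8,9) \<beta> YZ YZ_carrier
        in \<open>simp_all add: has_center_def convex_subgroup_def\<close>)
  from center1_blowup show ?thesis
    unfolding blowup_map_def Y_def Z_def image_if_split_interval[symmetric] .
qed
end
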